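(* Let $n$, $k$, $t$ be positive integers with $k\geq t+3$ and $n\geq 2k+1+\delta_{2,q}$. For positive integers $x$ define $$g(n,k,t,x)={x-t\brack 1}{n-t-1\brack k-t-1}+q^{x-t}{k-x+1\brack 1}{k-t+1\brack 1}{n-t-2\brack k-t-2}+q^{x-t}{k-x+1\brack 1}+q^{x-t+1}{t\brack 1}{k-t\brack 1}{n-x\brack k-x}+2.$$ Then $g(n,k,t,x)<g(n,k,t,x+1)$ for every $x\in\{t+2,\ldots,k-1\}$.
   Context: $q$ is a prime power and ${m\brack r}$ denotes the Gaussian binomial coefficient $\prod_{i=0}^{r-1}\frac{q^{m-i}-1}{q^{r-i}-1}$ (equal to $1$ for $r=0$). $\delta_{a,b}$ is the Kronecker delta. *)

theory Defs
  imports Complex_Main "HOL-Computational_Algebra.Primes"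
begin

definition prime_power_nat :: "nat \<Rightarrow> bool" where
  "prime_power_nat q \<longleftrightarrow> (\<exists>p e. prime p \<and> e \<ge> 1 \<and> q = p ^ e)"

definition gauss_binom :: "nat \<Rightarrow> nat \<Rightarrow> nat \<Rightarrow> real" where
  "gauss_binom q m r = (\<Prod>i<r. (real q ^ (m - i) - 1) / (real q ^ (r - i) - 1))"

definition gfun :: "nat \<Rightarrow> nat \<Rightarrow> nat \<Rightarrow> nat \<Rightarrow> nat \<Rightarrow> real" where
  "gfun q n k t x =
     gauss_binom q (x - t) 1 * gauss_binom q (n - t - 1) (k - t - 1)
   + real q ^ (x - t) * gauss_binom q (k - x + 1) 1 * gauss_binom q (k - t + 1) 1
       * gauss_binom q (n - t - 2) (k - t - 2)
   + real q ^ (x - t) * gauss_binom q (k - x + 1) 1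
   + real q ^ (x - t + 1) * gauss_binom q t 1 * gauss_binom q (k - t) 1
       * gauss_binom q (n - x) (k - x)
   + 2"

end

theory Submission
  imports Defs
begin

text \<open>Write [m] for the q-integer gauss_binom q m 1. Since [a + 1] = [a] + q^a = q [a] + 1,
  passing from x to x + 1 changes g by q^(x-t) times gfun_step_coeff plus a nonnegative term.
  With G1 = [n-t-1, k-t-1], G2 = [n-t-2, k-t-2] and H = [n-x, k-x], peeling one factor off G1
  gives G1 \<ge> q^(n-k) G2 \<ge> q^(k+1) G2, shifting both entries of H gives H \<le> G2, and writing
  q^m = (q - 1) [m] + 1 shows [k-t+1] + q [t] [k-t] + 1 < q^(k+1); hence the step coefficient
  is positive.\<close>

lemma prime_power_nat_ge_2:
  assumes "prime_power_nat q"
  shows "2 \<le> q"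
proof -
  obtain p e where "prime p" "1 \<le> e" "q = p ^ e"
    using assms unfolding prime_power_nat_def by blast
  then show ?thesis
    using prime_ge_2_nat[of p] self_le_power[of p e] by simp
qed

lemma gauss_binom_1: "gauss_binom q m 1 = (real q ^ m - 1) / (real q - 1)"
  by (simp add: gauss_binom_def lessThan_Suc)

lemma power_eq_gauss_binom_1: "q \<noteq> 1 \<Longrightarrow> real q ^ m = (real q - 1) * gauss_binom q m 1 + 1"
  unfolding gauss_binom_1 by simp

lemma gauss_binom_Suc_1_mult: "q \<noteq> 1 \<Longrightarrow> gauss_binom q (Suc m) 1 = real q * gauss_binom q m 1 + 1"
  unfolding gauss_binom_1 by (simp add: field_simps)

lemma gauss_binom_Suc_1_add: "q \<noteq> 1 \<Longrightarrow> gauss_binom q (Suc m) 1 = gauss_binom q m 1 + real q ^ m"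
  unfolding gauss_binom_1 by (simp add: field_simps)

lemma gauss_binom_nonneg: "1 \<le> q \<Longrightarrow> 0 \<le> gauss_binom q m r"
  unfolding gauss_binom_def by (intro prod_nonneg divide_nonneg_nonneg) auto

lemma gauss_binom_ge_1:
  assumes "2 \<le> q" "r \<le> m"
  shows "1 \<le> gauss_binom q m r"
  unfolding gauss_binom_def
proof (rule prod_ge_1)
  fix i assume "i \<in> {..<r}"
  then have "1 < real q ^ (r - i)" and "real q ^ (r - i) \<le> real q ^ (m - i)"
    using assms by (auto intro: one_less_power power_increasing)
  then show "1 \<le> (real q ^ (m - i) - 1) / (real q ^ (r - i) - 1)"
    by simp
qed

lemma gauss_binom_Suc_Suc:
  "gauss_binom q (Suc m) (Suc r) = (real q ^ Suc m - 1) / (real q ^ Suc r - 1) * gauss_binom q m r"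
  unfolding gauss_binom_def prod.lessThan_Suc_shift by simp

lemma gauss_binom_Suc_Suc_ge:
  assumes "2 \<le> q" "r \<le> m"
  shows "real q ^ (m - r) * gauss_binom q m r \<le> gauss_binom q (Suc m) (Suc r)"
proof -
  have denom_pos: "0 < real q ^ Suc r - 1"
    using assms by (simp add: one_less_power del: power_Suc)
  have "real q ^ (m - r) * (real q ^ Suc r - 1) = real q ^ Suc m - real q ^ (m - r)"
    using assms by (simp add: right_diff_distrib power_add[symmetric] del: power_Suc)
  also have "\<dots> \<le> real q ^ Suc m - 1"
    using assms by simp
  finally have "real q ^ (m - r) \<le> (real q ^ Suc m - 1) / (real q ^ Suc r - 1)"
    using denom_pos by (simp add: pos_le_divide_eq)
  then show ?thesis
    unfolding gauss_binom_Suc_Suc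
    using gauss_binom_nonneg[of q m r] assms by (intro mult_right_mono) auto
qed

lemma gauss_binom_le_shift:
  assumes "2 \<le> q" "r \<le> m"
  shows "gauss_binom q m r \<le> gauss_binom q (m + j) (r + j)"
proof (induction j)
  case 0
  show ?case by simp
next
  case (Suc j)
  have "gauss_binom q (m + j) (r + j) \<le> real q ^ (m - r) * gauss_binom q (m + j) (r + j)"
    using assms gauss_binom_nonneg[of q "m + j" "r + j"] by (simp add: mult_le_cancel_right1)
  also have "\<dots> \<le> gauss_binom q (Suc (m + j)) (Suc (r + j))"
    using gauss_binom_Suc_Suc_ge[of q "r + j" "m + j"] assms by simp
  finally show ?case
    using Suc.IH by simp
qed

lemma gauss_binom_1_sum_less_power:
  assumes "2 \<le> q" "1 \<le> t"
  shows "gauss_binom q (Suc s) 1 + real q * gauss_binom q t 1 * gauss_binom q s 1 + 1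
    < real q ^ (t + s + 1)"
proof -
  define d A S where "d = real q - 1" and "A = gauss_binom q t 1" and "S = gauss_binom q s 1"
  have "1 \<le> d" "1 \<le> A" "0 \<le> S"
    using assms gauss_binom_ge_1[of q 1 t] gauss_binom_nonneg[of q s 1]
    by (auto simp: d_def A_def S_def)
  have q_pos: "0 < real q"
    using assms by simp
  have "gauss_binom q (Suc s) 1 + real q * A * S + 1 = real q * (A * S + S) + 2"
    using assms gauss_binom_Suc_1_mult[of q s] by (simp add: S_def algebra_simps)
  also have "\<dots> < real q * (A * S + A + S + 1)"
  proof -
    have "real q * (A * S + A + S + 1) = real q * (A * S + S) + real q * A + real q"
      by (simp add: algebra_simps)
    moreover have "real q \<le> real q * A"
      using \<open>1 \<le> A\<close> q_pos by simp
    ultimately show ?thesis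
      using assms by linarith
  qed
  also have "\<dots> \<le> real q * (d * d * (A * S) + d * A + d * S + 1)"
  proof -
    have "1 \<le> d * d"
      using \<open>1 \<le> d\<close> mult_mono[of 1 d 1 d] by simp
    moreover have "0 \<le> A * S"
      using \<open>1 \<le> A\<close> \<open>0 \<le> S\<close> by simp
    ultimately have "A * S \<le> d * d * (A * S)"
      using mult_right_mono[of 1 "d * d" "A * S"] by simp
    moreover have "A \<le> d * A" and "S \<le> d * S"
      using \<open>1 \<le> d\<close> \<open>1 \<le> A\<close> \<open>0 \<le> S\<close> by (simp_all add: mult_le_cancel_right1)
    ultimately show ?thesis
      using q_pos by (intro mult_left_mono) auto
  qed
  also have "\<dots> = real q * ((d * A + 1) * (d * S + 1))"
    by (simp add: algebra_simps)
  also have "\<dots> = real q ^ (t + s + 1)"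
    using assms power_eq_gauss_binom_1[of q t] power_eq_gauss_binom_1[of q s]
    by (simp add: power_add d_def A_def S_def)
  finally show ?thesis
    by (simp add: A_def S_def)
qed

definition gfun_step_coeff :: "nat \<Rightarrow> nat \<Rightarrow> nat \<Rightarrow> nat \<Rightarrow> nat \<Rightarrow> real" where
  "gfun_step_coeff q n k t x =
     gauss_binom q (n - t - 1) (k - t - 1)
   - gauss_binom q (k - t + 1) 1 * gauss_binom q (n - t - 2) (k - t - 2) - 1
   - real q * gauss_binom q t 1 * gauss_binom q (k - t) 1 * gauss_binom q (n - x) (k - x)"

lemma gfun_Suc_diff:
  assumes "q \<noteq> 1" "t \<le> x" "x < k"
  shows "gfun q n k t (x + 1) - gfun q n k t x =
      real q ^ (x - t) * gfun_step_coeff q n k t x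
    + real q ^ (x - t + 2) * gauss_binom q t 1 * gauss_binom q (k - t) 1
        * gauss_binom q (n - (x + 1)) (k - (x + 1))"
proof -
  have "gauss_binom q (x + 1 - t) 1 = gauss_binom q (x - t) 1 + real q ^ (x - t)"
    and "gauss_binom q (k - x + 1) 1 = real q * gauss_binom q (k - (x + 1) + 1) 1 + 1"
    and "real q ^ (x + 1 - t) = real q * real q ^ (x - t)"
    and "real q ^ (x + 1 - t + 1) = real q ^ (x - t + 2)"
    using assms gauss_binom_Suc_1_add[of q "x - t"] gauss_binom_Suc_1_mult[of q "k - x"]
    by (simp_all add: Suc_diff_le Suc_diff_Suc)
  then show ?thesis
    unfolding gfun_def gfun_step_coeff_def by (simp add: algebra_simps)
qed

lemma gfun_step_coeff_pos:
  assumes "2 \<le> q" "1 \<le> t" "t + 2 \<le> x" "x \<le> k" "2 * k + 1 \<le> n"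
  shows "0 < gfun_step_coeff q n k t x"
proof -
  define C c G1 G2 H where "C = gauss_binom q (k - t + 1) 1"
    and "c = real q * gauss_binom q t 1 * gauss_binom q (k - t) 1"
    and "G1 = gauss_binom q (n - t - 1) (k - t - 1)"
    and "G2 = gauss_binom q (n - t - 2) (k - t - 2)"
    and "H = gauss_binom q (n - x) (k - x)"
  have "C + c + 1 < real q ^ (t + (k - t) + 1)"
    using gauss_binom_1_sum_less_power[of q t "k - t"] assms by (simp add: C_def c_def)
  also have "\<dots> \<le> real q ^ (n - k)"
    using assms by (intro power_increasing) auto
  finally have small: "C + c + 1 < real q ^ (n - k)" .
  have G1_ge: "real q ^ (n - k) * G2 \<le> G1"
    using gauss_binom_Suc_Suc_ge[of q "k - t - 2" "n - t - 2"] assms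
    by (simp add: G1_def G2_def Suc_diff_Suc numeral_2_eq_2)
  have H_le: "H \<le> G2"
    using gauss_binom_le_shift[of q "k - x" "n - x" "x - t - 2"] assms
    by (simp add: H_def G2_def)
  have "1 \<le> G2" "0 \<le> c"
    using gauss_binom_ge_1 gauss_binom_nonneg assms by (auto simp: G2_def c_def)
  then have "real q ^ (n - k) - C - c \<le> (real q ^ (n - k) - C - c) * G2" and "c * H \<le> c * G2"
    using small H_le by (simp_all add: mult_left_mono)
  then have "0 < G1 - C * G2 - 1 - c * H"
    using small G1_ge by (simp add: algebra_simps)
  then show ?thesis
    by (simp add: gfun_step_coeff_def C_def c_def G1_def G2_def H_def)
qed

theorem lemma2p4:
  fixes q n k t x :: nat
  assumes "prime_power_nat q"
    and "n > 0" and "k > 0" and "t > 0"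
    and "k \<ge> t + 3"
    and "n \<ge> 2 * k + 1 + (if q = 2 then 1 else 0)"
    and "t + 2 \<le> x" and "x \<le> k - 1"
  shows "gfun q n k t x < gfun q n k t (x + 1)"
proof -
  have q: "2 \<le> q"
    using assms(1) by (rule prime_power_nat_ge_2)
  have "0 < gfun_step_coeff q n k t x"
    using assms(4-8) q by (intro gfun_step_coeff_pos) auto
  then have "0 < real q ^ (x - t) * gfun_step_coeff q n k t x"
    using q by simp
  moreover have "0 \<le> real q ^ (x - t + 2) * gauss_binom q t 1 * gauss_binom q (k - t) 1
      * gauss_binom q (n - (x + 1)) (k - (x + 1))"
    using gauss_binom_nonneg q by simp
  moreover have "q \<noteq> 1" "t \<le> x" "x < k"
    using q assms(3,7,8) by auto
  ultimately show ?thesis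
    using gfun_Suc_diff[of q t x k n] by linarith
qed

end
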